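(* In the general surveillance-evasion game described in the context, let $V$ be its value and, for $t\ge0$, let $\Gamma(t)=\partial\mathcal{L}(t)$ with $\mathcal{L}(t)=\{X\in\Omega: V(X)\ge t\}$. For any $X\in\Omega$, if there exist $0\le t_1<t_2$ such that $X\in\Gamma(t)$ for all $t\in[t_1,t_2]$, then $V$ is discontinuous at $X$.
   Context: Let $\mathcal{O}\subset\mathbb{R}^2$ be open, bounded, with Lipschitz boundary, $\Omega_{\mathrm{free}}=\mathbb{R}^2\setminus\mathcal{O}$. There are $m$ evaders $E=(E^{(1)},\dots,E^{(m)})$ and $n$ pursuers $P=(P^{(1)},\dots,P^{(n)})$ with dynamics $\dot E^{(i)}=f(E^{(i)},a^{(i)}(t))$, $\dot P^{(j)}=g(P^{(j)},b^{(j)}(t))$, where $\mathcal{A},\mathcal{B}$ are compact control sets, $f:\Omega_{\mathrm{free}}\times\mathcal{A}\to\mathbb{R}^2$, $g:\Omega_{\mathrm{free}}\times\mathcal{B}\to\mathbb{R}^2$ are Lipschitz in the state, the velocity sets $\{f(E,a):a\in\mathcal{A}\}$, $\{g(P,b):b\in\mathcal{B}\}$ are convex, and for every point of $\partial\mathcal{O}$ each velocity set meets the interior of Clarke's tangent cone to $\Omega_{\mathrm{free}}$ there. Controls $a:(0,\infty)\to\mathcal{A}^m$, $b:(0,\infty)\to\mathcal{B}^n$ are measurable and admissible if all players stay in $\Omega_{\mathrm{free}}$ for all times. Target $\mathcal{T}=\{(E,P)\in\Omega_{\mathrm{free}}^{m+n}:[E^{(i)},P^{(j)}]\cap\mathcal{O}\ne\emptyset\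 \forall i,j\}$; $\partial\mathcal{T}$ and all boundaries are taken relative to the topology of $\Omega_{\mathrm{free}}^{m+n}$; game domain $\Omega=\Omega_{\mathrm{free}}^{m+n}\setminus\mathcal{T}$. End time $t^\ast=\min\{t\ge0:(E(t),P(t))\in\partial\mathcal{T}\}$ ($+\infty$ if none). The value is $V(X)=\inf_\alpha\sup_b t^\ast(X,\alpha[b],b)$, the inf over non-anticipating strategies $\alpha$ of the evaders (maps from admissible pursuer controls to admissible evader controls such that $b_1=b_2$ a.e. on $(0,\tau)$ implies $\alpha[b_1]=\alpha[b_2]$ a.e. on $(0,\tau)$) and the sup over admissible pursuer controls $b$. *)

theory Defs
  imports "HOL-Analysis.Analysis"
begin

definition lipschitz_boundary :: "(real^2) set \<Rightarrow> bool" where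
  "lipschitz_boundary Obs \<longleftrightarrow>
     (\<forall>p\<in>frontier Obs. \<exists>(R::real^2 \<Rightarrow> real^2) (\<gamma>::real \<Rightarrow> real) L r h.
        orthogonal_transformation R \<and> L-lipschitz_on UNIV \<gamma> \<and> r > 0 \<and> h > 0 \<and>
        \<gamma> 0 = 0 \<and> (\<forall>s. \<bar>s\<bar> < r \<longrightarrow> \<bar>\<gamma> s\<bar> < h) \<and>
        (\<forall>x. \<bar>R (x - p) $ 1\<bar> < r \<and> \<bar>R (x - p) $ 2\<bar> < h \<longrightarrow>
              (x \<in> Obs \<longleftrightarrow> R (x - p) $ 2 < \<gamma> (R (x - p) $ 1))))"

definition clarke_tangent_cone :: "'a::real_normed_vector set \<Rightarrow> 'a \<Rightarrow> 'a set" where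
  "clarke_tangent_cone S x = {v. \<forall>(xs::nat \<Rightarrow> 'a) (ts::nat \<Rightarrow> real).
      (\<forall>k. xs k \<in> S) \<and> xs \<longlonglongrightarrow> x \<and> (\<forall>k. ts k > 0) \<and> ts \<longlonglongrightarrow> 0 \<longrightarrow>
      (\<exists>vs. vs \<longlonglongrightarrow> v \<and> (\<forall>k. xs k + ts k *\<^sub>R vs k \<in> S))}"

text \<open>Joint state space \<Omega>_free^(m+n): evaders indexed by 'm, pursuers by 'n.\<close>
definition free_space :: "(real^2) set \<Rightarrow> ((real^2^'m) \<times> (real^2^'n)) set" where
  "free_space Obs = {(E, P). (\<forall>i. E $ i \<notin> Obs) \<and> (\<forall>j. P $ j \<notin> Obs)}"

definition target :: "(real^2) set \<Rightarrow> ((real^2^'m) \<times> (real^2^'n)) set" where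
  "target Obs = {(E, P) \<in> free_space Obs.
      \<forall>i j. closed_segment (E $ i) (P $ j) \<inter> Obs \<noteq> {}}"

definition game_domain :: "(real^2) set \<Rightarrow> ((real^2^'m) \<times> (real^2^'n)) set" where
  "game_domain Obs = free_space Obs - target Obs"

definition is_traj :: "(real^2) set \<Rightarrow> (real^2 \<Rightarrow> 'c \<Rightarrow> real^2) \<Rightarrow> real^2^'k
    \<Rightarrow> (real \<Rightarrow> 'c^'k) \<Rightarrow> (real \<Rightarrow> real^2^'k) \<Rightarrow> bool" where
  "is_traj Obs h x0 c Y \<longleftrightarrow> Y 0 = x0 \<and>
     (\<forall>t\<ge>0. \<forall>i. Y t $ i \<notin> Obs \<and>
        ((\<lambda>s. h (Y s $ i) (c s $ i)) has_integral (Y t $ i - x0 $ i)) {0..t})"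

definition admissible_ctrl :: "(real^2) set \<Rightarrow> 'c::topological_space set
    \<Rightarrow> (real^2 \<Rightarrow> 'c \<Rightarrow> real^2) \<Rightarrow> real^2^'k \<Rightarrow> (real \<Rightarrow> 'c^'k) \<Rightarrow> bool" where
  "admissible_ctrl Obs C h x0 c \<longleftrightarrow>
     (\<forall>t>0. \<forall>i. c t $ i \<in> C) \<and>
     (\<forall>i. (\<lambda>t. c t $ i) \<in> borel_measurable (restrict_space lebesgue {0<..})) \<and>
     (\<exists>Y. is_traj Obs h x0 c Y)"

definition end_time :: "(real^2) set \<Rightarrow> (real \<Rightarrow> (real^2^'m) \<times> (real^2^'n)) \<Rightarrow> ereal" where
  "end_time Obs Z = Inf {ereal t | t. t \<ge> 0 \<and>
      Z t \<in> (subtopology euclidean (free_space Obs)) frontier_of (target Obs)}"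

definition payoff :: "(real^2) set \<Rightarrow> (real^2 \<Rightarrow> 'ca \<Rightarrow> real^2) \<Rightarrow> (real^2 \<Rightarrow> 'cb \<Rightarrow> real^2)
    \<Rightarrow> (real^2^'m) \<times> (real^2^'n) \<Rightarrow> (real \<Rightarrow> 'ca^'m) \<Rightarrow> (real \<Rightarrow> 'cb^'n) \<Rightarrow> ereal" where
  "payoff Obs f g X a b = (THE \<tau>. \<exists>E P. is_traj Obs f (fst X) a E \<and> is_traj Obs g (snd X) b P
      \<and> \<tau> = end_time Obs (\<lambda>t. (E t, P t)))"

definition evader_strategies :: "(real^2) set \<Rightarrow> 'ca::topological_space set \<Rightarrow> 'cb::topological_space set
    \<Rightarrow> (real^2 \<Rightarrow> 'ca \<Rightarrow> real^2) \<Rightarrow> (real^2 \<Rightarrow> 'cb \<Rightarrow> real^2) \<Rightarrow> (real^2^'m) \<times> (real^2^'n)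
    \<Rightarrow> ((real \<Rightarrow> 'cb^'n) \<Rightarrow> (real \<Rightarrow> 'ca^'m)) set" where
  "evader_strategies Obs A B f g X = {\<alpha>.
     (\<forall>b. admissible_ctrl Obs B g (snd X) b \<longrightarrow> admissible_ctrl Obs A f (fst X) (\<alpha> b)) \<and>
     (\<forall>b1 b2 \<tau>. admissible_ctrl Obs B g (snd X) b1 \<and> admissible_ctrl Obs B g (snd X) b2 \<and>
        (AE t in lebesgue. t \<in> {0<..<\<tau>} \<longrightarrow> b1 t = b2 t) \<longrightarrow>
        (AE t in lebesgue. t \<in> {0<..<\<tau>} \<longrightarrow> \<alpha> b1 t = \<alpha> b2 t))}"

definition game_value :: "(real^2) set \<Rightarrow> 'ca::topological_space set \<Rightarrow> 'cb::topological_space set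
    \<Rightarrow> (real^2 \<Rightarrow> 'ca \<Rightarrow> real^2) \<Rightarrow> (real^2 \<Rightarrow> 'cb \<Rightarrow> real^2) \<Rightarrow> (real^2^'m) \<times> (real^2^'n) \<Rightarrow> ereal" where
  "game_value Obs A B f g X =
     (INF \<alpha> \<in> evader_strategies Obs A B f g X.
        SUP b \<in> {b. admissible_ctrl Obs B g (snd X) b}. payoff Obs f g X (\<alpha> b) b)"

definition level_set :: "(real^2) set \<Rightarrow> 'ca::topological_space set \<Rightarrow> 'cb::topological_space set
    \<Rightarrow> (real^2 \<Rightarrow> 'ca \<Rightarrow> real^2) \<Rightarrow> (real^2 \<Rightarrow> 'cb \<Rightarrow> real^2) \<Rightarrow> real
    \<Rightarrow> ((real^2^'m) \<times> (real^2^'n)) set" where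
  "level_set Obs A B f g t = {X \<in> game_domain Obs. game_value Obs A B f g X \<ge> ereal t}"

definition Gamma :: "(real^2) set \<Rightarrow> 'ca::topological_space set \<Rightarrow> 'cb::topological_space set
    \<Rightarrow> (real^2 \<Rightarrow> 'ca \<Rightarrow> real^2) \<Rightarrow> (real^2 \<Rightarrow> 'cb \<Rightarrow> real^2) \<Rightarrow> real
    \<Rightarrow> ((real^2^'m) \<times> (real^2^'n)) set" where
  "Gamma Obs A B f g t = (subtopology euclidean (free_space Obs)) frontier_of (level_set Obs A B f g t)"

end

theory Submission
  imports Defs
begin

(* Suppose V were continuous at X. As X lies in the closure of {V >= t2}, continuity gives
   V X >= t2 > t1, so V > t1 on a whole neighbourhood of X in the game domain. Yet X is not
   an interior point of {V >= t1} relative to the free space, so every neighbourhood of X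
   meets the free space outside the game domain, i.e. the target: X lies on the boundary of
   the target, where every play ends at time 0. It remains to see that the evaders have an
   admissible control at all (then the constant strategy gives V X <= 0 < t2). This is a
   viability argument: near the obstacle, a control whose velocity lies in the interior of
   Clarke's tangent cone is hypertangent (thanks to the Lipschitz boundary) and keeps a
   Picard solution outside for a short time; away from the obstacle every control does. By
   compactness of the boundary these times are uniform, and the short pieces concatenate. *)

section \<open>Local existence for Lipschitz ODEs\<close>

lemma ext_cont_bcontfun:
  fixes f :: "'a::euclidean_space \<Rightarrow> 'b::metric_space"
  assumes "continuous_on (cbox a b) f"
  shows "ext_cont f a b \<in> bcontfun"
proof -
  obtain g :: "'a \<Rightarrow>\<^sub>C 'b" where "\<And>x. g x = f (clamp a b x)"
    using continuous_on_cbox_bcontfunE[OF assms] by metis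
  then have "ext_cont f a b = apply_bcontfun g" by (auto simp: ext_cont_def)
  then show ?thesis using apply_bcontfun by metis
qed

lemma clamp_real_in_interval: "a \<le> b \<Longrightarrow> clamp a b t \<in> {a..b::real}"
  using clamp_in_interval[of a b t] by simp

(* Clamping time to [a, b] turns the Picard map into a self-map of the bounded continuous
   functions on the whole line, where Banach's fixed point theorem is available. *)
definition picard_operator ::
    "('a::euclidean_space \<Rightarrow> 'a) \<Rightarrow> real \<Rightarrow> real \<Rightarrow> 'a \<Rightarrow> (real \<Rightarrow>\<^sub>C 'a) \<Rightarrow> (real \<Rightarrow>\<^sub>C 'a)" where
  "picard_operator G a b x0 u = Bcontfun (ext_cont (\<lambda>t. x0 + integral {a..t} (\<lambda>s. G (u s))) a b)"

lemma apply_picard_operator: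
  assumes "continuous_on UNIV G"
  shows "picard_operator G a b x0 u t = x0 + integral {a..clamp a b t} (\<lambda>s. G (u s))"
proof -
  have "continuous_on {a..b} (\<lambda>t. x0 + integral {a..t} (\<lambda>s. G (u s)))"
    by (intro continuous_intros indefinite_integral_continuous_1 integrable_continuous_interval
        continuous_on_compose2[OF assms]) auto
  then have "ext_cont (\<lambda>t. x0 + integral {a..t} (\<lambda>s. G (u s))) a b \<in> bcontfun"
    by (intro ext_cont_bcontfun) simp
  then show ?thesis
    by (simp add: picard_operator_def Bcontfun_inverse ext_cont_def)
qed

lemma picard_operator_contraction:
  fixes G :: "'a::euclidean_space \<Rightarrow> 'a"
  assumes G: "K-lipschitz_on UNIV G" and "a \<le> b"
  shows "dist (picard_operator G a b x0 u) (picard_operator G a b x0 w) \<le> ((b - a) * K) * dist u w"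
proof (rule dist_bound)
  fix t
  have cont: "continuous_on UNIV G" using G by (rule lipschitz_on_continuous_on)
  have int: "(\<lambda>s. G (v s)) integrable_on {c..d}" for v :: "real \<Rightarrow>\<^sub>C 'a" and c d
    by (intro integrable_continuous_interval continuous_on_compose2[OF cont]) auto
  define c where "c = clamp a b t"
  have c: "a \<le> c" "c \<le> b" using clamp_real_in_interval[OF \<open>a \<le> b\<close>] by (auto simp: c_def)
  have "dist (picard_operator G a b x0 u t) (picard_operator G a b x0 w t)
      = norm (integral {a..c} (\<lambda>s. G (u s) - G (w s)))"
    by (simp add: apply_picard_operator[OF cont] dist_norm integral_diff[OF int int] c_def)
  also have "\<dots> \<le> (K * dist u w) * (c - a)"
  proof (rule integral_bound)
    show "continuous_on {a..c} (\<lambda>s. G (u s) - G (w s))"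
      by (intro continuous_intros continuous_on_compose2[OF cont]) auto
    fix s
    have "norm (G (u s) - G (w s)) \<le> K * dist (u s) (w s)"
      using lipschitz_onD[OF G] by (simp add: dist_norm)
    also have "\<dots> \<le> K * dist u w"
      by (intro mult_left_mono dist_bounded lipschitz_on_nonneg[OF G])
    finally show "norm (G (u s) - G (w s)) \<le> K * dist u w" .
  qed (use c in auto)
  also have "\<dots> \<le> ((b - a) * K) * dist u w"
    using c lipschitz_on_nonneg[OF G] by (simp add: mult_left_mono mult_right_mono mult_ac)
  finally show "dist (picard_operator G a b x0 u t) (picard_operator G a b x0 w t) \<le> ((b - a) * K) * dist u w" .
qed

lemma picard_local_existence:
  fixes G :: "'a::euclidean_space \<Rightarrow> 'a"
  assumes G: "K-lipschitz_on UNIV G" and "0 \<le> \<tau>" "\<tau> * K \<le> 1/2"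
  obtains y where "y t0 = x0"
    and "\<And>t. t \<in> {t0..t0+\<tau>} \<Longrightarrow> ((\<lambda>s. G (y s)) has_integral (y t - x0)) {t0..t}"
    and "\<And>t. t \<in> {t0..t0+\<tau>} \<Longrightarrow> norm (y t - x0) \<le> 2 * \<tau> * norm (G x0)"
proof -
  let ?\<Phi> = "picard_operator G t0 (t0+\<tau>) x0"
  have cont: "continuous_on UNIV G" using G by (rule lipschitz_on_continuous_on)
  have K: "0 \<le> K" using G by (rule lipschitz_on_nonneg)
  have contr: "dist (?\<Phi> u) (?\<Phi> w) \<le> (\<tau> * K) * dist u w" for u w
    using picard_operator_contraction[OF G, of t0 "t0+\<tau>"] \<open>0 \<le> \<tau>\<close> by simp
  obtain y where fix_y: "?\<Phi> y = y"
    using banach_fix_type[of "\<tau> * K" ?\<Phi>] contr \<open>0 \<le> \<tau>\<close> K \<open>\<tau> * K \<le> 1/2\<close> by auto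
  have y: "y t = x0 + integral {t0..t} (\<lambda>s. G (y s))" if "t \<in> {t0..t0+\<tau>}" for t
    using apply_picard_operator[OF cont, of t0 "t0+\<tau>" x0 y t] fix_y that by simp
  define c where "c = (const_bcontfun x0 :: real \<Rightarrow>\<^sub>C 'a)"
  have "dist (?\<Phi> c) c \<le> \<tau> * norm (G x0)"
  proof (rule dist_bound)
    fix t
    have "clamp t0 (t0+\<tau>) t \<in> {t0..t0+\<tau>}" using \<open>0 \<le> \<tau>\<close> by (intro clamp_real_in_interval) simp
    then show "dist (?\<Phi> c t) (c t) \<le> \<tau> * norm (G x0)"
      by (simp add: apply_picard_operator[OF cont] c_def dist_norm mult_right_mono)
  qed
  \<comment> \<open>a fixed point of a contraction with constant 1/2 lies within twice the first step\<close>
  have "dist y c \<le> dist (?\<Phi> y) (?\<Phi> c) + dist (?\<Phi> c) c"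
    using fix_y dist_triangle by metis
  also have "\<dots> \<le> (1/2) * dist y c + \<tau> * norm (G x0)"
    using contr[of y c] \<open>\<tau> * K \<le> 1/2\<close> mult_right_mono[OF \<open>\<tau> * K \<le> 1/2\<close> zero_le_dist[of y c]]
      \<open>dist (?\<Phi> c) c \<le> _\<close> by linarith
  finally have dist_yc: "dist y c \<le> 2 * \<tau> * norm (G x0)" by simp
  show ?thesis
  proof
    show "y t0 = x0" using y[of t0] \<open>0 \<le> \<tau>\<close> by simp
  next
    fix t assume "t \<in> {t0..t0+\<tau>}"
    moreover have "(\<lambda>s. G (y s)) integrable_on {t0..t}"
      by (intro integrable_continuous_interval continuous_on_compose2[OF cont]) auto
    ultimately show "((\<lambda>s. G (y s)) has_integral (y t - x0)) {t0..t}"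
      using y[of t] by (simp add: integrable_integral)
    show "norm (y t - x0) \<le> 2 * \<tau> * norm (G x0)"
      using dist_bounded[of y t c] dist_yc by (simp add: c_def dist_norm)
  qed
qed

lemma mcshane_extension:
  fixes g :: "'a::metric_space \<Rightarrow> real"
  assumes "S \<noteq> {}" and g: "L-lipschitz_on S g"
  obtains h where "\<And>x. x \<in> S \<Longrightarrow> h x = g x" and "L-lipschitz_on UNIV h"
proof
  define h where "h x = (INF y\<in>S. g y + L * dist x y)" for x
  have L: "0 \<le> L" using g \<open>S \<noteq> {}\<close> lipschitz_on_nonneg by blast
  have g_le: "g z \<le> g y + L * dist z y" if "y \<in> S" "z \<in> S" for y z
    using lipschitz_onD[OF g that(2,1)] by (simp add: dist_real_def abs_le_iff)
  obtain y0 where y0: "y0 \<in> S" using \<open>S \<noteq> {}\<close> by blast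
  have bdd: "bdd_below ((\<lambda>y. g y + L * dist x y) ` S)" for x
  proof (rule bdd_belowI2)
    fix y assume "y \<in> S"
    have "L * dist y0 y \<le> L * dist x y0 + L * dist x y"
      using dist_triangle3[of y0 y x] L by (metis distrib_left mult_left_mono)
    then show "g y0 - L * dist x y0 \<le> g y + L * dist x y"
      using g_le[OF \<open>y \<in> S\<close> y0] by linarith
  qed
  show "h x = g x" if "x \<in> S" for x
    unfolding h_def
    by (rule cInf_eq_minimum) (use that g_le in \<open>force simp: dist_commute\<close>)+
  have "h x \<le> h x' + L * dist x x'" for x x'
  proof -
    have "h x - L * dist x x' \<le> h x'"
      unfolding h_def[of x']
    proof (rule cINF_greatest[OF \<open>S \<noteq> {}\<close>])
      fix y assume "y \<in> S"
      have "h x \<le> g y + L * dist x y"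
        unfolding h_def by (rule cINF_lower[OF bdd \<open>y \<in> S\<close>])
      moreover have "L * dist x y \<le> L * dist x x' + L * dist x' y"
        using dist_triangle[of x y x'] L by (metis distrib_left mult_left_mono)
      ultimately show "h x - L * dist x x' \<le> g y + L * dist x' y" by linarith
    qed
    then show ?thesis by linarith
  qed
  then show "L-lipschitz_on UNIV h"
    by (intro lipschitz_onI L) (smt (verit, best) dist_commute dist_real_def)
qed

lemma lipschitz_extension_cart:
  fixes g :: "'a::metric_space \<Rightarrow> real^'n" and L :: real
  assumes "S \<noteq> {}" and g: "L-lipschitz_on S g"
  obtains G where "\<And>x. x \<in> S \<Longrightarrow> G x = g x" and "(CARD('n) * L)-lipschitz_on UNIV G"
proof -
  have comp: "L-lipschitz_on S (\<lambda>x. g x $ i)" for i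
  proof (rule lipschitz_onI)
    show "dist (g x $ i) (g y $ i) \<le> L * dist x y" if "x \<in> S" "y \<in> S" for x y
      using dist_vec_nth_le lipschitz_onD[OF g that] order_trans by blast
  qed (rule lipschitz_on_nonneg[OF g])
  have "\<forall>i. \<exists>h. (\<forall>x\<in>S. h x = g x $ i) \<and> L-lipschitz_on UNIV h"
  proof
    fix i
    obtain h where "\<And>x. x \<in> S \<Longrightarrow> h x = g x $ i" "L-lipschitz_on UNIV h"
      using mcshane_extension[OF \<open>S \<noteq> {}\<close> comp[of i]] by blast
    then show "\<exists>h. (\<forall>x\<in>S. h x = g x $ i) \<and> L-lipschitz_on UNIV h" by blast
  qed
  then obtain h where h: "\<And>i x. x \<in> S \<Longrightarrow> h i x = g x $ i" "\<And>i. L-lipschitz_on UNIV (h i)"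
    by (metis choice)
  show ?thesis
  proof
    show "(\<chi> i. h i x) = g x" if "x \<in> S" for x
      using h(1) that by (simp add: vec_eq_iff)
    have "dist (\<chi> i. h i x) (\<chi> i. h i y) \<le> CARD('n) * L * dist x y" for x y
    proof -
      have "dist (\<chi> i. h i x) (\<chi> i. h i y) \<le> (\<Sum>i\<in>UNIV. \<bar>h i x - h i y\<bar>)"
        using norm_le_l1_cart[of "(\<chi> i. h i x) - (\<chi> i. h i y)"] by (simp add: dist_norm)
      also have "\<dots> \<le> (\<Sum>i\<in>(UNIV::'n set). L * dist x y)"
        using lipschitz_onD[OF h(2)] by (intro sum_mono) (simp add: dist_real_def)
      finally show ?thesis by simp
    qed
    then show "(CARD('n) * L)-lipschitz_on UNIV (\<lambda>x. \<chi> i. h i x)"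
      using lipschitz_on_nonneg[OF h(2)] by (intro lipschitz_onI) auto
  qed
qed

section \<open>Hypertangent directions of a Lipschitz domain\<close>

definition hypertangent :: "'a::real_normed_vector set \<Rightarrow> 'a \<Rightarrow> 'a \<Rightarrow> real \<Rightarrow> bool" where
  "hypertangent S p v \<delta> \<longleftrightarrow> 0 < \<delta> \<and> (\<forall>x w t. x \<in> S \<longrightarrow> dist x p < \<delta> \<longrightarrow> dist w v < \<delta> \<longrightarrow>
      0 < t \<longrightarrow> t < \<delta> \<longrightarrow> x + t *\<^sub>R w \<in> S)"

lemma lipschitz_chart_step_outside:
  fixes R :: "real^2 \<Rightarrow> real^2" and \<gamma> :: "real \<Rightarrow> real"
  assumes "linear R" and \<gamma>: "L-lipschitz_on UNIV \<gamma>"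
    and chart: "\<And>x. \<bar>R (x - p) $ 1\<bar> < r \<Longrightarrow> \<bar>R (x - p) $ 2\<bar> < h \<Longrightarrow>
      (x \<in> Obs \<longleftrightarrow> R (x - p) $ 2 < \<gamma> (R (x - p) $ 1))"
    and z: "z \<notin> Obs" "\<bar>R (z - p) $ 1\<bar> < r" "\<bar>R (z - p) $ 2\<bar> < h"
    and z': "\<bar>R (z + t *\<^sub>R d - p) $ 1\<bar> < r" "\<bar>R (z + t *\<^sub>R d - p) $ 2\<bar> < h"
    and "0 \<le> t" and steep: "L * \<bar>R d $ 1\<bar> \<le> R d $ 2"
  shows "z + t *\<^sub>R d \<notin> Obs"
proof -
  define u where "u = R (z - p)"
  have split: "R (z + t *\<^sub>R d - p) = u + t *\<^sub>R R d"
    using linear_add[OF \<open>linear R\<close>, of "z - p" "t *\<^sub>R d"] linear_cmul[OF \<open>linear R\<close>]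
    by (simp add: u_def algebra_simps)
  have "\<gamma> (u $ 1 + t * R d $ 1) \<le> \<gamma> (u $ 1) + L * \<bar>t * R d $ 1\<bar>"
    using lipschitz_onD[OF \<gamma>, of "u $ 1 + t * R d $ 1" "u $ 1"] by (simp add: dist_real_def abs_le_iff)
  also have "\<dots> \<le> \<gamma> (u $ 1) + t * R d $ 2"
    using mult_left_mono[OF steep \<open>0 \<le> t\<close>] \<open>0 \<le> t\<close> by (simp add: abs_mult mult.left_commute)
  also have "\<gamma> (u $ 1) \<le> u $ 2" using chart[of z] z by (auto simp: u_def)
  finally show ?thesis using chart[of "z + t *\<^sub>R d"] z' by (auto simp: split)
qed

lemma hypertangent_sequentially:
  fixes Obs :: "(real^2) set"
  assumes LB: "lipschitz_boundary Obs" and p: "p \<in> frontier Obs"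
    and v: "v \<in> interior (clarke_tangent_cone (- Obs) p)"
    and xs: "xs \<longlonglongrightarrow> p" "\<And>k. xs k \<notin> Obs" and ts: "ts \<longlonglongrightarrow> 0" "\<And>k. 0 < ts k"
    and ws: "ws \<longlonglongrightarrow> v"
  shows "\<forall>\<^sub>F k in sequentially. xs k + ts k *\<^sub>R ws k \<notin> Obs"
proof -
  obtain R :: "real^2 \<Rightarrow> real^2" and \<gamma> :: "real \<Rightarrow> real" and L r h where
    R: "orthogonal_transformation R" and \<gamma>: "L-lipschitz_on UNIV \<gamma>" and "r > 0" "h > 0"
    and chart: "\<And>x. \<bar>R (x - p) $ 1\<bar> < r \<Longrightarrow> \<bar>R (x - p) $ 2\<bar> < h \<Longrightarrow>
              (x \<in> Obs \<longleftrightarrow> R (x - p) $ 2 < \<gamma> (R (x - p) $ 1))"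
    using LB p unfolding lipschitz_boundary_def by metis
  have R_lin: "linear R" using R by (rule orthogonal_transformation_linear)
  then have R_lim: "(\<lambda>k. R (f k)) \<longlonglongrightarrow> R l" if "f \<longlonglongrightarrow> l" for f l
    using that by (simp add: linear_conv_bounded_linear bounded_linear.tendsto)
  have in_chart: "\<forall>\<^sub>F k in sequentially. \<bar>R (f k - p) $ 1\<bar> < r \<and> \<bar>R (f k - p) $ 2\<bar> < h"
    if "f \<longlonglongrightarrow> p" for f
  proof -
    have "(\<lambda>k. R (f k - p)) \<longlonglongrightarrow> 0"
      using R_lim[OF tendsto_diff[OF that tendsto_const[of p]]] linear_0[OF R_lin] by simp
    from tendsto_rabs[OF tendsto_vec_nth[OF this]]
    have lim: "(\<lambda>k. \<bar>R (f k - p) $ i\<bar>) \<longlonglongrightarrow> 0" for i by simp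
    show ?thesis
      using order_tendstoD(2)[OF lim \<open>r > 0\<close>] order_tendstoD(2)[OF lim \<open>h > 0\<close>]
      by (rule eventually_conj)
  qed
  \<comment> \<open>Tilting v downwards in the chart keeps it Clarke tangent; the tilted direction is
    realised by points z k outside Obs, from which ws k points steeply upwards.\<close>
  obtain e where "e > 0" and e: "ball v e \<subseteq> clarke_tangent_cone (- Obs) p"
    using v by (meson mem_interior)
  obtain E where E: "R E = axis 2 1" using orthogonal_transformation_surj[OF R] by (metis surjD)
  have "norm E = 1" using orthogonal_transformation_norm[OF R, of E] E by simp
  define c where "c = e / 2"
  have "c > 0" using \<open>e > 0\<close> by (simp add: c_def)
  have "v - c *\<^sub>R E \<in> clarke_tangent_cone (- Obs) p"
    using e \<open>e > 0\<close> \<open>norm E = 1\<close> by (auto simp: c_def dist_norm)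
  then obtain vs where vs: "vs \<longlonglongrightarrow> v - c *\<^sub>R E" "\<And>k. xs k + ts k *\<^sub>R vs k \<in> - Obs"
    using xs ts unfolding clarke_tangent_cone_def by blast
  define z where "z k = xs k + ts k *\<^sub>R vs k" for k
  define d where "d k = ws k - vs k" for k
  have z: "z \<longlonglongrightarrow> p" unfolding z_def using tendsto_add[OF xs(1) tendsto_scaleR[OF ts(1) vs(1)]] by simp
  have "d \<longlonglongrightarrow> c *\<^sub>R E" unfolding d_def using tendsto_diff[OF ws vs(1)] by simp
  then have "(\<lambda>k. R (d k)) \<longlonglongrightarrow> c *\<^sub>R axis 2 1" using R_lim E linear_cmul[OF R_lin] by metis
  from tendsto_vec_nth[OF this, of 2] tendsto_vec_nth[OF this, of 1]
  have "(\<lambda>k. R (d k) $ 2 - L * \<bar>R (d k) $ 1\<bar>) \<longlonglongrightarrow> c - L * \<bar>0\<bar>"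
    by (intro tendsto_intros) (simp_all add: axis_def)
  then have "\<forall>\<^sub>F k in sequentially. 0 < R (d k) $ 2 - L * \<bar>R (d k) $ 1\<bar>"
    using \<open>c > 0\<close> by (intro order_tendstoD(1)) auto
  then have steep: "\<forall>\<^sub>F k in sequentially. L * \<bar>R (d k) $ 1\<bar> \<le> R (d k) $ 2"
    by eventually_elim simp
  have "(\<lambda>k. z k + ts k *\<^sub>R d k) \<longlonglongrightarrow> p"
    using tendsto_add[OF z tendsto_scaleR[OF ts(1) \<open>d \<longlonglongrightarrow> _\<close>]] by simp
  from in_chart[OF z] in_chart[OF this] steep show ?thesis
  proof eventually_elim
    case (elim k)
    have "z k \<notin> Obs" using vs(2) by (simp add: z_def)
    with elim have "z k + ts k *\<^sub>R d k \<notin> Obs"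
      using lipschitz_chart_step_outside[OF R_lin \<gamma> chart] less_imp_le[OF ts(2)] by blast
    then show ?case by (simp add: z_def d_def algebra_simps)
  qed
qed

lemma interior_clarke_tangent_cone_hypertangent:
  fixes Obs :: "(real^2) set"
  assumes LB: "lipschitz_boundary Obs" and p: "p \<in> frontier Obs"
    and v: "v \<in> interior (clarke_tangent_cone (- Obs) p)"
  obtains \<delta> where "hypertangent (- Obs) p v \<delta>"
proof (rule ccontr)
  assume "\<not> thesis"
  then have "\<not> hypertangent (- Obs) p v (1 / Suc k)" for k using that by blast
  then have "\<exists>x w t. x \<notin> Obs \<and> dist x p < 1 / Suc k \<and> dist w v < 1 / Suc k
      \<and> 0 < t \<and> t < 1 / Suc k \<and> x + t *\<^sub>R w \<in> Obs" for k
    unfolding hypertangent_def by auto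
  then obtain xs ws ts where S: "\<And>k. xs k \<notin> Obs \<and> dist (xs k) p < 1 / Suc k
      \<and> dist (ws k) v < 1 / Suc k \<and> 0 < ts k \<and> ts k < 1 / Suc k \<and> xs k + ts k *\<^sub>R ws k \<in> Obs"
    by metis
  have lim: "(\<lambda>k. 1 / real (Suc k)) \<longlonglongrightarrow> 0"
    by (rule LIMSEQ_inverse_real_of_nat[unfolded inverse_eq_divide])
  have "norm (dist (xs k) p) \<le> 1 / Suc k" "norm (dist (ws k) v) \<le> 1 / Suc k"
    "norm (ts k) \<le> 1 / Suc k" for k
    using S[of k] by auto
  then have "xs \<longlonglongrightarrow> p" "ws \<longlonglongrightarrow> v" "ts \<longlonglongrightarrow> 0"
    by (auto intro!: tendsto_dist_iff[THEN iffD2] Lim_null_comparison[OF always_eventually lim])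
  then have "\<forall>\<^sub>F k in sequentially. xs k + ts k *\<^sub>R ws k \<notin> Obs"
    using S by (intro hypertangent_sequentially[OF LB p v]) simp_all
  then obtain N where "\<And>k. k \<ge> N \<Longrightarrow> xs k + ts k *\<^sub>R ws k \<notin> Obs"
    by (auto simp: eventually_sequentially)
  then show False using S[of N] by auto
qed

lemma hypertangent_controls:
  fixes Obs :: "(real^2) set" and f :: "real^2 \<Rightarrow> 'c \<Rightarrow> real^2"
  assumes "lipschitz_boundary Obs"
    and "\<forall>p\<in>frontier Obs. (\<lambda>a. f p a) ` A \<inter> interior (clarke_tangent_cone (- Obs) p) \<noteq> {}"
  obtains ap \<delta> where "\<forall>p\<in>frontier Obs. ap p \<in> A \<and> hypertangent (- Obs) p (f p (ap p)) (\<delta> p)"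
proof -
  have "\<forall>p\<in>frontier Obs. \<exists>a\<delta>. fst a\<delta> \<in> A \<and> hypertangent (- Obs) p (f p (fst a\<delta>)) (snd a\<delta>)"
  proof
    fix p assume p: "p \<in> frontier Obs"
    then obtain a where "a \<in> A" and a: "f p a \<in> interior (clarke_tangent_cone (- Obs) p)"
      using assms(2) by blast
    obtain \<delta> where "hypertangent (- Obs) p (f p a) \<delta>"
      by (rule interior_clarke_tangent_cone_hypertangent[OF assms(1) p a])
    with \<open>a \<in> A\<close> show "\<exists>a\<delta>. fst a\<delta> \<in> A \<and> hypertangent (- Obs) p (f p (fst a\<delta>)) (snd a\<delta>)"
      by (intro exI[of _ "(a, \<delta>)"]) simp
  qed
  from bchoice[OF this] obtain a\<delta>
    where "\<forall>p\<in>frontier Obs. fst (a\<delta> p) \<in> A \<and> hypertangent (- Obs) p (f p (fst (a\<delta> p))) (snd (a\<delta> p))"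
    by blast
  then show ?thesis by (intro that[of "\<lambda>p. fst (a\<delta> p)" "\<lambda>p. snd (a\<delta> p)"])
qed

section \<open>Viability of the free space\<close>

lemma hypertangent_flow_stays:
  fixes G :: "'a::euclidean_space \<Rightarrow> 'a"
  assumes G: "K-lipschitz_on UNIV G" and hyp: "hypertangent S p (G p) \<delta>"
    and \<rho>: "(4 * K + 2) * \<rho> \<le> \<delta>" and "\<tau> < \<delta>" and x: "x \<in> S" "dist x p < \<rho>"
    and y: "y t0 = x" "\<And>t. t \<in> {t0..t0+\<tau>} \<Longrightarrow> ((\<lambda>s. G (y s)) has_integral (y t - x)) {t0..t}"
      "\<And>t. t \<in> {t0..t0+\<tau>} \<Longrightarrow> norm (y t - x) \<le> \<rho>"
    and t: "t \<in> {t0..t0+\<tau>}"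
  shows "y t \<in> S"
proof (cases "t = t0")
  case True
  then show ?thesis using y(1) x(1) by simp
next
  case False
  with t have "t0 < t" by simp
  have K: "0 \<le> K" using G by (rule lipschitz_on_nonneg)
  have "0 < \<rho>" using x(2) zero_le_dist[of x p] by linarith
  have "(4 * K + 2) * \<rho> = 2 * (K * (2 * \<rho>)) + 2 * \<rho>" by (simp add: algebra_simps)
  moreover have "0 \<le> K * (2 * \<rho>)" using K \<open>0 < \<rho>\<close> by simp
  ultimately have K\<rho>: "K * (2 * \<rho>) \<le> \<delta> / 2" and "\<rho> < \<delta>" using \<rho> \<open>0 < \<rho>\<close> by linarith+
  have G_close: "norm (G (y s) - G p) \<le> \<delta> / 2" if "s \<in> cbox t0 t" for s
  proof -
    have "norm (y s - p) \<le> norm (y s - x) + norm (x - p)"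
      using norm_triangle_ineq[of "y s - x" "x - p"] by simp
    also have "\<dots> \<le> 2 * \<rho>" using y(3)[of s] that t x(2) by (simp add: dist_norm)
    finally have "norm (G (y s) - G p) \<le> K * (2 * \<rho>)"
      using lipschitz_onD[OF G, of "y s" p] K by (simp add: dist_norm) (meson mult_left_mono order_trans)
    then show ?thesis using K\<rho> by linarith
  qed
  have "((\<lambda>s. G (y s) - G p) has_integral (y t - x - (t - t0) *\<^sub>R G p)) (cbox t0 t)"
    using has_integral_diff[OF y(2)[OF t] has_integral_const_real[of "G p" t0 t]] \<open>t0 < t\<close> by simp
  from has_integral_bound[OF _ this G_close] \<open>t0 < t\<close>
  have "norm (y t - x - (t - t0) *\<^sub>R G p) \<le> \<delta> / 2 * (t - t0)"
    using \<open>\<rho> < \<delta>\<close> \<open>0 < \<rho>\<close> by simp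
  define w where "w = (1 / (t - t0)) *\<^sub>R (y t - x)"
  have "w - G p = (1 / (t - t0)) *\<^sub>R (y t - x - (t - t0) *\<^sub>R G p)"
    using \<open>t0 < t\<close> by (simp add: w_def scaleR_diff_right)
  then have "dist w (G p) = norm (y t - x - (t - t0) *\<^sub>R G p) / (t - t0)"
    using \<open>t0 < t\<close> by (simp add: dist_norm)
  also have "\<dots> \<le> \<delta> / 2"
    using \<open>norm (y t - x - _) \<le> _\<close> \<open>t0 < t\<close> by (simp add: pos_divide_le_eq)
  finally have "dist w (G p) \<le> \<delta> / 2" .
  have "x + (t - t0) *\<^sub>R w \<in> S"
    using hyp x t \<open>dist w (G p) \<le> _\<close> \<open>\<rho> < \<delta>\<close> \<open>0 < \<rho>\<close> \<open>t0 < t\<close> \<open>\<tau> < \<delta>\<close>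
    unfolding hypertangent_def by auto
  moreover have "y t = x + (t - t0) *\<^sub>R w" using \<open>t0 < t\<close> by (simp add: w_def)
  ultimately show ?thesis by simp
qed

lemma far_displacement_avoids_bounded:
  fixes x y :: "'a::real_normed_vector"
  assumes Obs: "\<And>z. z \<in> Obs \<Longrightarrow> norm z \<le> B \<and> d \<le> dist x z"
    and y: "norm (y - x) \<le> 2 * \<tau> * (C + K * norm x)"
    and near: "2 * \<tau> * (C + K * (2 * B + 1)) < d" and far: "2 * \<tau> * (C + K) \<le> 1 / 2"
    and "0 \<le> \<tau>" "0 \<le> K" "0 \<le> C" "0 \<le> B"
  shows "y \<notin> Obs"
proof
  assume "y \<in> Obs"
  show False
  proof (cases "norm x \<le> 2 * B + 1")
    case True
    then have "2 * \<tau> * (C + K * norm x) \<le> 2 * \<tau> * (C + K * (2 * B + 1))"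
      using assms(5,6) by (simp add: mult_left_mono)
    then show False using Obs[OF \<open>y \<in> Obs\<close>] y near by (simp add: dist_norm norm_minus_commute)
  next
    case False
    with \<open>0 \<le> B\<close> have "C \<le> C * norm x" using \<open>0 \<le> C\<close> by (simp add: mult_le_cancel_left1)
    then have "C + K * norm x \<le> (C + K) * norm x" by (simp add: algebra_simps)
    then have "2 * \<tau> * (C + K * norm x) \<le> 2 * \<tau> * ((C + K) * norm x)"
      using \<open>0 \<le> \<tau>\<close> by (simp add: mult_left_mono)
    also have "\<dots> = (2 * \<tau> * (C + K)) * norm x" by simp
    also have "\<dots> \<le> 1 / 2 * norm x" using far by (rule mult_right_mono) simp
    finally have "norm (y - x) \<le> norm x / 2" using y by simp
    moreover have "norm x \<le> norm y + norm (y - x)" by (metis norm_triangle_sub norm_minus_commute)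
    ultimately show False using Obs[OF \<open>y \<in> Obs\<close>] False by linarith
  qed
qed

lemma lipschitz_extension_flow_viable:
  fixes G :: "'a::euclidean_space \<Rightarrow> 'a"
  assumes G: "K-lipschitz_on UNIV G" and G_eq: "\<And>x. x \<in> S \<Longrightarrow> G x = f x"
    and "0 \<le> \<tau>" "\<tau> * K \<le> 1/2"
    and stays: "\<And>y t. y t0 = x \<Longrightarrow>
      (\<And>t. t \<in> {t0..t0+\<tau>} \<Longrightarrow> ((\<lambda>s. G (y s)) has_integral (y t - x)) {t0..t}) \<Longrightarrow>
      (\<And>t. t \<in> {t0..t0+\<tau>} \<Longrightarrow> norm (y t - x) \<le> 2 * \<tau> * norm (G x)) \<Longrightarrow>
      t \<in> {t0..t0+\<tau>} \<Longrightarrow> y t \<in> S"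
  shows "\<exists>y. y t0 = x \<and> (\<forall>t\<in>{t0..t0+\<tau>}. y t \<in> S \<and> ((\<lambda>s. f (y s)) has_integral (y t - x)) {t0..t})"
proof -
  obtain y where y: "y t0 = x" "\<And>t. t \<in> {t0..t0+\<tau>} \<Longrightarrow> ((\<lambda>s. G (y s)) has_integral (y t - x)) {t0..t}"
    "\<And>t. t \<in> {t0..t0+\<tau>} \<Longrightarrow> norm (y t - x) \<le> 2 * \<tau> * norm (G x)"
    using picard_local_existence[OF G \<open>0 \<le> \<tau>\<close> \<open>\<tau> * K \<le> 1/2\<close>] by metis
  have "y t \<in> S" if "t \<in> {t0..t0+\<tau>}" for t
    using stays[OF y] that by blast
  moreover have "((\<lambda>s. f (y s)) has_integral (y t - x)) {t0..t}" if "t \<in> {t0..t0+\<tau>}" for t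
    by (rule has_integral_eq[OF _ y(2)[OF that]]) (use that calculation G_eq in auto)
  ultimately show ?thesis using y(1) by blast
qed

lemma viable_step_near_hypertangent:
  fixes G :: "'a::euclidean_space \<Rightarrow> 'a"
  assumes G: "K-lipschitz_on UNIV G" and G_eq: "\<And>x. x \<in> S \<Longrightarrow> G x = f x"
    and hyp: "hypertangent S p (f p) \<delta>" and "p \<in> S" and \<rho>: "(4 * K + 2) * \<rho> \<le> \<delta>"
    and \<tau>: "0 \<le> \<tau>" "\<tau> * K \<le> 1/2" "\<tau> < \<delta>" "2 * \<tau> * (norm (f p) + K * \<rho>) \<le> \<rho>"
    and x: "x \<in> S" "dist x p < \<rho>"
  shows "\<exists>y. y t0 = x \<and> (\<forall>t\<in>{t0..t0+\<tau>}. y t \<in> S \<and> ((\<lambda>s. f (y s)) has_integral (y t - x)) {t0..t})"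
proof (rule lipschitz_extension_flow_viable[OF G G_eq \<tau>(1,2)])
  fix y t
  assume y: "y t0 = x" "\<And>t. t \<in> {t0..t0+\<tau>} \<Longrightarrow> ((\<lambda>s. G (y s)) has_integral (y t - x)) {t0..t}"
    "\<And>t. t \<in> {t0..t0+\<tau>} \<Longrightarrow> norm (y t - x) \<le> 2 * \<tau> * norm (G x)"
    and t: "t \<in> {t0..t0+\<tau>}"
  have "G p = f p" using G_eq \<open>p \<in> S\<close> by blast
  have "norm (G x) \<le> norm (G p) + K * dist x p"
    using lipschitz_onD[OF G, of x p] norm_triangle_sub[of "G x" "G p"] by (simp add: dist_norm)
  also have "\<dots> \<le> norm (f p) + K * \<rho>"
    using \<open>G p = f p\<close> mult_left_mono[OF less_imp_le[OF x(2)] lipschitz_on_nonneg[OF G]] by simp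
  finally have Gx: "norm (G x) \<le> norm (f p) + K * \<rho>" .
  have "norm (y s - x) \<le> \<rho>" if "s \<in> {t0..t0+\<tau>}" for s
  proof -
    have "norm (y s - x) \<le> 2 * \<tau> * norm (G x)" by (rule y(3)[OF that])
    also have "\<dots> \<le> 2 * \<tau> * (norm (f p) + K * \<rho>)" using Gx \<tau>(1) by (intro mult_left_mono) auto
    also have "\<dots> \<le> \<rho>" by (rule \<tau>(4))
    finally show ?thesis .
  qed
  with hyp \<open>G p = f p\<close> show "y t \<in> S"
    using hypertangent_flow_stays[OF G _ \<rho> \<tau>(3) x y(1,2) _ t] by simp
qed

lemma viable_step_far_from_bounded:
  fixes G :: "'a::euclidean_space \<Rightarrow> 'a"
  assumes G: "K-lipschitz_on UNIV G" and G_eq: "\<And>x. x \<notin> Obs \<Longrightarrow> G x = f x"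
    and Obs: "\<And>z. z \<in> Obs \<Longrightarrow> norm z \<le> B \<and> d \<le> dist x z" and "0 \<le> B"
    and \<tau>: "0 \<le> \<tau>" "\<tau> * K \<le> 1/2" "2 * \<tau> * (norm (G 0) + K * (2 * B + 1)) < d"
      "2 * \<tau> * (norm (G 0) + K) \<le> 1 / 2"
  shows "\<exists>y. y t0 = x \<and> (\<forall>t\<in>{t0..t0+\<tau>}. y t \<in> - Obs \<and> ((\<lambda>s. f (y s)) has_integral (y t - x)) {t0..t})"
proof (rule lipschitz_extension_flow_viable[OF G _ \<tau>(1,2)])
  show "G x = f x" if "x \<in> - Obs" for x using G_eq that by simp
  fix y t
  assume "y t0 = x" "\<And>t. t \<in> {t0..t0+\<tau>} \<Longrightarrow> ((\<lambda>s. G (y s)) has_integral (y t - x)) {t0..t}"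
    and y: "\<And>t. t \<in> {t0..t0+\<tau>} \<Longrightarrow> norm (y t - x) \<le> 2 * \<tau> * norm (G x)"
    and t: "t \<in> {t0..t0+\<tau>}"
  have "norm (G x) \<le> norm (G 0) + K * norm x"
    using lipschitz_onD[OF G, of x 0] norm_triangle_sub[of "G x" "G 0"] by (simp add: dist_norm)
  then have "2 * \<tau> * norm (G x) \<le> 2 * \<tau> * (norm (G 0) + K * norm x)"
    using \<tau>(1) by (intro mult_left_mono) auto
  with y[OF t] have "norm (y t - x) \<le> 2 * \<tau> * (norm (G 0) + K * norm x)" by linarith
  from far_displacement_avoids_bounded[OF Obs this \<tau>(3,4,1) lipschitz_on_nonneg[OF G] norm_ge_zero \<open>0 \<le> B\<close>]
  show "y t \<in> - Obs" by simp
qed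

lemma frontier_cover_or_far:
  fixes Obs :: "'a::euclidean_space set"
  assumes "open Obs" "bounded Obs" and \<rho>: "\<And>p. p \<in> frontier Obs \<Longrightarrow> 0 < \<rho> p"
  obtains P d where "finite P" "P \<subseteq> frontier Obs" "0 < d"
    and "\<forall>x. x \<notin> Obs \<longrightarrow> (\<exists>p\<in>P. dist x p < \<rho> p) \<or> (\<forall>z\<in>Obs. d \<le> dist x z)"
proof -
  obtain P where P: "P \<subseteq> frontier Obs" "finite P" "frontier Obs \<subseteq> (\<Union>p\<in>P. ball p (\<rho> p))"
    using compactE_image[OF compact_frontier_bounded[OF \<open>bounded Obs\<close>], of "frontier Obs" "\<lambda>p. ball p (\<rho> p)"]
      \<rho> by force
  let ?U = "\<Union>p\<in>P. ball p (\<rho> p)"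
  have "closure Obs \<inter> - (Obs \<union> ?U) = {}" using P(3) closure_Un_frontier by blast
  moreover have "closed (- (Obs \<union> ?U))" using \<open>open Obs\<close> by blast
  ultimately obtain d where "0 < d" and d: "\<And>z x. z \<in> closure Obs \<Longrightarrow> x \<notin> Obs \<union> ?U \<Longrightarrow> d \<le> dist z x"
    using separate_compact_closed[OF compact_closure[THEN iffD2, OF \<open>bounded Obs\<close>]] by (metis ComplI)
  have "(\<exists>p\<in>P. dist x p < \<rho> p) \<or> (\<forall>z\<in>Obs. d \<le> dist x z)" if "x \<notin> Obs" for x
    using d[of _ x] closure_subset that by (force simp: dist_commute)
  then have "\<forall>x. x \<notin> Obs \<longrightarrow> (\<exists>p\<in>P. dist x p < \<rho> p) \<or> (\<forall>z\<in>Obs. d \<le> dist x z)" by blast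
  with P(2,1) \<open>0 < d\<close> show ?thesis by (rule that)
qed

lemma small_parameter_exists:
  fixes Cs :: "(real \<times> real) set"
  assumes "finite Cs" and "\<And>c b. (c, b) \<in> Cs \<Longrightarrow> 0 < b"
  obtains \<tau> where "0 < \<tau>" and "\<forall>(c, b)\<in>Cs. \<tau> * c < b"
proof -
  have "\<forall>\<^sub>F \<tau> in at_right 0. \<forall>(c, b)\<in>Cs. \<tau> * c < b"
  proof (intro eventually_ball_finite \<open>finite Cs\<close> ballI, clarify)
    fix c b assume "(c, b) \<in> Cs"
    have "((\<lambda>\<tau>. \<tau> * c) \<longlongrightarrow> 0 * c) (at_right 0)" by (intro tendsto_intros)
    then show "\<forall>\<^sub>F \<tau> in at_right 0. \<tau> * c < b"
      using assms(2)[OF \<open>(c, b) \<in> Cs\<close>] by (intro order_tendstoD(2)) auto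
  qed
  then have "\<forall>\<^sub>F \<tau> in at_right 0. 0 < \<tau> \<and> (\<forall>(c, b)\<in>Cs. \<tau> * c < b)"
    using eventually_at_right_less by (rule eventually_conj[rotated])
  then obtain \<tau> where "0 < \<tau>" "\<forall>(c, b)\<in>Cs. \<tau> * c < b"
    using eventually_happens'[OF trivial_limit_at_right_real] by blast
  then show ?thesis by (rule that)
qed

lemma uniform_lipschitz_extensions:
  fixes f :: "'a::metric_space \<Rightarrow> 'c \<Rightarrow> real^'n"
  assumes "S \<noteq> {}" "A \<noteq> {}" and "\<exists>L. \<forall>a\<in>A. L-lipschitz_on S (\<lambda>x. f x a)"
  obtains K G where "0 \<le> K" "\<forall>a\<in>A. (\<forall>x\<in>S. G a x = f x a) \<and> K-lipschitz_on UNIV (G a)"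
proof -
  obtain L where L: "\<forall>a\<in>A. L-lipschitz_on S (\<lambda>x. f x a)" using assms(3) by blast
  obtain a0 where "a0 \<in> A" using \<open>A \<noteq> {}\<close> by blast
  with L have "0 \<le> L" using lipschitz_on_nonneg[of L S "\<lambda>x. f x a0"] by blast
  then have "0 \<le> CARD('n) * L" by simp
  have "\<forall>a\<in>A. \<exists>g. (\<forall>x\<in>S. g x = f x a) \<and> (CARD('n) * L)-lipschitz_on UNIV g"
  proof
    fix a assume "a \<in> A"
    have La: "L-lipschitz_on S (\<lambda>x. f x a)" using L \<open>a \<in> A\<close> by blast
    obtain g where "\<And>x. x \<in> S \<Longrightarrow> g x = f x a" "(CARD('n) * L)-lipschitz_on UNIV g"
      using lipschitz_extension_cart[OF \<open>S \<noteq> {}\<close> La] by blast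
    then show "\<exists>g. (\<forall>x\<in>S. g x = f x a) \<and> (CARD('n) * L)-lipschitz_on UNIV g" by blast
  qed
  from bchoice[OF this] obtain G where "\<forall>a\<in>A. (\<forall>x\<in>S. G a x = f x a) \<and> (CARD('n) * L)-lipschitz_on UNIV (G a)"
    by blast
  with \<open>0 \<le> CARD('n) * L\<close> show ?thesis by (rule that)
qed

lemma uniform_viable_step:
  fixes Obs :: "(real^2) set" and f :: "real^2 \<Rightarrow> 'c \<Rightarrow> real^2"
  assumes "open Obs" and "bounded Obs" and "lipschitz_boundary Obs" and "A \<noteq> {}"
    and "\<exists>L. \<forall>a\<in>A. L-lipschitz_on (- Obs) (\<lambda>x. f x a)"
    and "\<forall>p\<in>frontier Obs. (\<lambda>a. f p a) ` A \<inter> interior (clarke_tangent_cone (- Obs) p) \<noteq> {}"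
  obtains \<tau> :: real where "0 < \<tau>"
    and "\<forall>x\<in>- Obs. \<forall>t0. \<exists>a\<in>A. \<exists>y. y t0 = x \<and>
      (\<forall>t\<in>{t0..t0+\<tau>}. y t \<in> - Obs \<and> ((\<lambda>s. f (y s) a) has_integral (y t - x)) {t0..t})"
proof -
  have "- Obs \<noteq> {}"
  proof
    assume "- Obs = {}"
    then have "Obs = UNIV" by auto
    then show False using \<open>bounded Obs\<close> not_bounded_UNIV by metis
  qed
  obtain K G where "0 \<le> K" and G: "\<forall>a\<in>A. (\<forall>x\<in>- Obs. G a x = f x a) \<and> K-lipschitz_on UNIV (G a)"
    using uniform_lipschitz_extensions[OF \<open>- Obs \<noteq> {}\<close> \<open>A \<noteq> {}\<close> assms(5)] by blast
  obtain ap \<delta> where ap: "\<forall>p\<in>frontier Obs. ap p \<in> A \<and> hypertangent (- Obs) p (f p (ap p)) (\<delta> p)"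
    using hypertangent_controls[OF assms(3,6)] by blast
  define \<rho> where "\<rho> p = \<delta> p / (4 * K + 2)" for p
  have \<rho>: "(4 * K + 2) * \<rho> p \<le> \<delta> p" for p using \<open>0 \<le> K\<close> by (simp add: \<rho>_def)
  have \<delta>_pos: "0 < \<delta> p" and \<rho>_pos: "0 < \<rho> p" if "p \<in> frontier Obs" for p
    using ap that \<open>0 \<le> K\<close> by (auto simp: \<rho>_def hypertangent_def)
  obtain P d where "finite P" "P \<subseteq> frontier Obs" "0 < d"
    and cover: "\<forall>x. x \<notin> Obs \<longrightarrow> (\<exists>p\<in>P. dist x p < \<rho> p) \<or> (\<forall>z\<in>Obs. d \<le> dist x z)"
    using frontier_cover_or_far[where \<rho> = \<rho>, OF \<open>open Obs\<close> \<open>bounded Obs\<close> \<rho>_pos] by blast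
  obtain B where "0 < B" and B: "\<And>z. z \<in> Obs \<Longrightarrow> norm z \<le> B"
    using \<open>bounded Obs\<close> bounded_pos by metis
  obtain a0 where "a0 \<in> A" using \<open>A \<noteq> {}\<close> by blast
  define C where "C = norm (G a0 0)"
  \<comment> \<open>finitely many smallness conditions \<tau> * c < b on the step length\<close>
  define Cs where "Cs = {(K, 1/2), (2 * (C + K * (2 * B + 1)), d), (2 * (C + K), 1/2)}
    \<union> (\<lambda>p. (1, \<delta> p)) ` P \<union> (\<lambda>p. (2 * (norm (f p (ap p)) + K * \<rho> p), \<rho> p)) ` P"
  have "finite Cs" using \<open>finite P\<close> by (simp add: Cs_def)
  moreover have "0 < b" if "(c, b) \<in> Cs" for c b
    using that \<open>0 < d\<close> \<rho>_pos \<delta>_pos \<open>P \<subseteq> frontier Obs\<close> unfolding Cs_def by auto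
  ultimately obtain \<tau> where "0 < \<tau>" and \<tau>: "\<forall>(c, b)\<in>Cs. \<tau> * c < b"
    by (rule small_parameter_exists)
  have "(K, 1/2) \<in> Cs" by (simp add: Cs_def)
  with \<tau> have "\<tau> * K \<le> 1/2" by auto
  have "\<exists>a\<in>A. \<exists>y. y t0 = x \<and> (\<forall>t\<in>{t0..t0+\<tau>}. y t \<in> - Obs \<and> ((\<lambda>s. f (y s) a) has_integral (y t - x)) {t0..t})"
    if "x \<in> - Obs" for x t0
  proof -
    from cover that consider p where "p \<in> P" "dist x p < \<rho> p" | "\<forall>z\<in>Obs. d \<le> dist x z"
      by auto
    then show ?thesis
    proof cases
      case 1
      then have p: "p \<in> frontier Obs" "p \<in> - Obs"
        using \<open>P \<subseteq> frontier Obs\<close> \<open>open Obs\<close> by (auto simp: frontier_def interior_open)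
      have Ga: "K-lipschitz_on UNIV (G (ap p))" "\<And>y. y \<in> - Obs \<Longrightarrow> G (ap p) y = f y (ap p)"
        "ap p \<in> A" "hypertangent (- Obs) p (f p (ap p)) (\<delta> p)"
        using G ap p(1) by auto
      have "(1, \<delta> p) \<in> Cs" "(2 * (norm (f p (ap p)) + K * \<rho> p), \<rho> p) \<in> Cs"
        using 1(1) by (simp_all add: Cs_def)
      with \<tau> have "\<tau> * 1 < \<delta> p" "\<tau> * (2 * (norm (f p (ap p)) + K * \<rho> p)) < \<rho> p"
        by auto
      then have "\<tau> < \<delta> p" "2 * \<tau> * (norm (f p (ap p)) + K * \<rho> p) \<le> \<rho> p"
        by (simp_all add: algebra_simps)
      from viable_step_near_hypertangent[where G = "G (ap p)" and S = "- Obs" and f = "\<lambda>y. f y (ap p)"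
          and ?t0.0 = t0, OF Ga(1,2,4) p(2) \<rho> less_imp_le[OF \<open>0 < \<tau>\<close>] \<open>\<tau> * K \<le> 1/2\<close> this that 1(2)]
      show ?thesis using Ga(3) by blast
    next
      case 2
      have Ga: "K-lipschitz_on UNIV (G a0)" "\<And>y. y \<notin> Obs \<Longrightarrow> G a0 y = f y a0"
        using G \<open>a0 \<in> A\<close> by auto
      have "(2 * (C + K * (2 * B + 1)), d) \<in> Cs" "(2 * (C + K), 1/2) \<in> Cs"
        by (simp_all add: Cs_def)
      with \<tau> have "\<tau> * (2 * (C + K * (2 * B + 1))) < d" "\<tau> * (2 * (C + K)) < 1/2"
        by auto
      then have far: "2 * \<tau> * (norm (G a0 0) + K * (2 * B + 1)) < d"
          "2 * \<tau> * (norm (G a0 0) + K) \<le> 1 / 2"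
        by (simp_all add: C_def algebra_simps)
      have Obs_far: "\<And>z. z \<in> Obs \<Longrightarrow> norm z \<le> B \<and> d \<le> dist x z" using B 2 by blast
      from viable_step_far_from_bounded[where G = "G a0" and f = "\<lambda>y. f y a0" and ?t0.0 = t0,
          OF Ga Obs_far less_imp_le[OF \<open>0 < B\<close>] less_imp_le[OF \<open>0 < \<tau>\<close>] \<open>\<tau> * K \<le> 1/2\<close> far]
      show ?thesis using \<open>a0 \<in> A\<close> by blast
    qed
  qed
  then show ?thesis using that[OF \<open>0 < \<tau>\<close>] by blast
qed

lemma nat_floor_divide_eq:
  fixes \<tau> s :: real
  assumes "0 < \<tau>" "k * \<tau> \<le> s" "s < k * \<tau> + \<tau>"
  shows "nat \<lfloor>s / \<tau>\<rfloor> = k"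
proof -
  have "real k \<le> s / \<tau>" "s / \<tau> < real k + 1"
    using assms by (simp_all add: pos_le_divide_eq pos_divide_less_eq algebra_simps)
  then have "\<lfloor>s / \<tau>\<rfloor> = int k" by (simp add: floor_eq_iff)
  then show ?thesis by simp
qed

lemma nat_floor_divide_bounds:
  fixes \<tau> t :: real
  assumes "0 < \<tau>" "0 \<le> t"
  shows "nat \<lfloor>t / \<tau>\<rfloor> * \<tau> \<le> t" "t < nat \<lfloor>t / \<tau>\<rfloor> * \<tau> + \<tau>"
proof -
  have "real (nat \<lfloor>t / \<tau>\<rfloor>) = \<lfloor>t / \<tau>\<rfloor>" using assms by simp
  then have "real (nat \<lfloor>t / \<tau>\<rfloor>) \<le> t / \<tau>" "t / \<tau> < real (nat \<lfloor>t / \<tau>\<rfloor>) + 1" by linarith+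
  then show "nat \<lfloor>t / \<tau>\<rfloor> * \<tau> \<le> t" "t < nat \<lfloor>t / \<tau>\<rfloor> * \<tau> + \<tau>"
    using \<open>0 < \<tau>\<close> by (simp_all add: pos_le_divide_eq pos_divide_less_eq algebra_simps)
qed

lemma piecewise_constant_measurable:
  fixes h :: "nat \<Rightarrow> 'c::topological_space" and \<tau> :: real
  shows "(\<lambda>t. h (nat \<lfloor>t / \<tau>\<rfloor>)) \<in> borel_measurable (restrict_space lebesgue {0<..})"
proof -
  have "(\<lambda>t. h (nat \<lfloor>t / \<tau>\<rfloor>)) \<in> borel_measurable lborel"
    by (rule measurable_compose[OF measurable_compose[OF _ measurable_real_floor]]) simp_all
  then show ?thesis by (intro measurable_restrict_space1 measurable_completion)
qed

lemma viable_trajectory_of_uniform_steps: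
  fixes f :: "'a::banach \<Rightarrow> 'c::topological_space \<Rightarrow> 'a" and \<tau> :: real
  assumes "0 < \<tau>" and x0: "x0 \<in> S"
    and step: "\<forall>x\<in>S. \<forall>t0. \<exists>a\<in>A. \<exists>y. y t0 = x \<and>
      (\<forall>t\<in>{t0..t0+\<tau>}. y t \<in> S \<and> ((\<lambda>s. f (y s) a) has_integral (y t - x)) {t0..t})"
  obtains c :: "real \<Rightarrow> 'c" and Y :: "real \<Rightarrow> 'a"
  where "\<forall>t. c t \<in> A" "c \<in> borel_measurable (restrict_space lebesgue {0<..})" "Y 0 = x0"
    and "\<forall>t\<ge>0. Y t \<in> S \<and> ((\<lambda>s. f (Y s) (c s)) has_integral (Y t - x0)) {0..t}"
proof -
  define viable where "viable x t0 a y \<longleftrightarrow> a \<in> A \<and> y t0 = x \<and>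
      (\<forall>t\<in>{t0..t0+\<tau>}. y t \<in> S \<and> ((\<lambda>s. f (y s) a) has_integral (y t - x)) {t0..t})"
    for x t0 a y
  have "\<exists>a y. viable x t0 a y" if "x \<in> S" for x t0
    using step that unfolding viable_def by blast
  then obtain sa sy where "\<And>x t0. x \<in> S \<Longrightarrow> viable x t0 (sa x t0) (sy x t0)"
    by metis
  then have sasy: "\<And>x t0. x \<in> S \<Longrightarrow> sa x t0 \<in> A \<and> sy x t0 t0 = x \<and>
      (\<forall>t\<in>{t0..t0+\<tau>}. sy x t0 t \<in> S \<and> ((\<lambda>s. f (sy x t0 s) (sa x t0)) has_integral (sy x t0 t - x)) {t0..t})"
    unfolding viable_def by blast
  define xs where "xs = rec_nat x0 (\<lambda>k x. sy x (real k * \<tau>) (real k * \<tau> + \<tau>))"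
  have xs_simps: "xs 0 = x0" "xs (Suc k) = sy (xs k) (k * \<tau>) (k * \<tau> + \<tau>)" for k
    by (simp_all add: xs_def)
  have xs_S: "xs k \<in> S" for k
    by (induction k) (use x0 sasy \<open>0 < \<tau>\<close> in \<open>auto simp: xs_simps\<close>)
  define n where "n t = nat \<lfloor>t / \<tau>\<rfloor>" for t
  define c where "c t = sa (xs (n t)) (n t * \<tau>)" for t
  define Y where "Y t = sy (xs (n t)) (n t * \<tau>) t" for t
  have piece: "((\<lambda>s. f (Y s) (c s)) has_integral (sy (xs k) (k * \<tau>) t - xs k)) {k * \<tau>..t}"
    if "t \<in> {k * \<tau>..k * \<tau> + \<tau>}" for k t
  proof -
    have "((\<lambda>s. f (sy (xs k) (k * \<tau>) s) (sa (xs k) (k * \<tau>))) has_integral (sy (xs k) (k * \<tau>) t - xs k))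
        {k * \<tau>..t}"
      using sasy[OF xs_S[of k], of "k * \<tau>"] that by blast
    then show ?thesis
    proof (rule has_integral_spike_finite[rotated 2])
      fix s assume "s \<in> {k * \<tau>..t} - {k * \<tau> + \<tau>}"
      then have "n s = k" using that \<open>0 < \<tau>\<close> unfolding n_def by (intro nat_floor_divide_eq) auto
      then show "f (Y s) (c s) = f (sy (xs k) (k * \<tau>) s) (sa (xs k) (k * \<tau>))"
        by (simp add: Y_def c_def)
    qed simp
  qed
  have upto: "((\<lambda>s. f (Y s) (c s)) has_integral (xs k - x0)) {0..k * \<tau>}" for k
  proof (induction k)
    case 0
    show ?case by (simp add: xs_simps has_integral_refl)
  next
    case (Suc k)
    from has_integral_combine[OF _ _ Suc piece[of "k * \<tau> + \<tau>" k]] \<open>0 < \<tau>\<close>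
    show ?case by (simp add: xs_simps algebra_simps)
  qed
  have "\<forall>t. c t \<in> A" using sasy[OF xs_S] by (simp add: c_def)
  moreover have "c \<in> borel_measurable (restrict_space lebesgue {0<..})"
  proof -
    have "c = (\<lambda>t. sa (xs (nat \<lfloor>t / \<tau>\<rfloor>)) (nat \<lfloor>t / \<tau>\<rfloor> * \<tau>))" by (simp add: fun_eq_iff c_def n_def)
    then show ?thesis using piecewise_constant_measurable[of "\<lambda>k. sa (xs k) (k * \<tau>)" \<tau>] by simp
  qed
  moreover have "Y 0 = x0"
    using nat_floor_divide_eq[OF \<open>0 < \<tau>\<close>, of 0 0] sasy[OF x0, of 0] by (simp add: Y_def n_def xs_simps)
  moreover have "\<forall>t\<ge>0. Y t \<in> S \<and> ((\<lambda>s. f (Y s) (c s)) has_integral (Y t - x0)) {0..t}"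
  proof (intro allI impI)
    fix t :: real assume "0 \<le> t"
    have t: "t \<in> {n t * \<tau>..n t * \<tau> + \<tau>}"
      using nat_floor_divide_bounds[OF \<open>0 < \<tau>\<close> \<open>0 \<le> t\<close>] by (simp add: n_def)
    then have "sy (xs (n t)) (n t * \<tau>) t \<in> S" using sasy[OF xs_S, of "n t" "n t * \<tau>"] by blast
    moreover have "((\<lambda>s. f (Y s) (c s)) has_integral
        (xs (n t) - x0 + (sy (xs (n t)) (n t * \<tau>) t - xs (n t)))) {0..t}"
      by (rule has_integral_combine[OF _ _ upto piece[OF t]]) (use t \<open>0 < \<tau>\<close> in auto)
    ultimately show "Y t \<in> S \<and> ((\<lambda>s. f (Y s) (c s)) has_integral (Y t - x0)) {0..t}"
      by (simp add: Y_def)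
  qed
  ultimately show ?thesis by (rule that)
qed

lemma admissible_ctrl_exists:
  fixes Obs :: "(real^2) set" and f :: "real^2 \<Rightarrow> 'c::topological_space \<Rightarrow> real^2"
    and x0 :: "real^2^'k"
  assumes "open Obs" and "bounded Obs" and "lipschitz_boundary Obs" and "A \<noteq> {}"
    and "\<exists>L. \<forall>a\<in>A. L-lipschitz_on (- Obs) (\<lambda>x. f x a)"
    and "\<forall>p\<in>frontier Obs. (\<lambda>a. f p a) ` A \<inter> interior (clarke_tangent_cone (- Obs) p) \<noteq> {}"
    and x0: "\<forall>i. x0 $ i \<notin> Obs"
  obtains a where "admissible_ctrl Obs A f x0 a"
proof -
  obtain \<tau> :: real where "0 < \<tau>" and step: "\<forall>x\<in>- Obs. \<forall>t0. \<exists>a\<in>A. \<exists>y. y t0 = x \<and>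
      (\<forall>t\<in>{t0..t0+\<tau>}. y t \<in> - Obs \<and> ((\<lambda>s. f (y s) a) has_integral (y t - x)) {t0..t})"
    by (rule uniform_viable_step[OF assms(1-6)])
  define viable where "viable x c Y \<longleftrightarrow> (\<forall>t. c t \<in> A) \<and>
      c \<in> borel_measurable (restrict_space lebesgue {0<..}) \<and> Y 0 = x \<and>
      (\<forall>t\<ge>0. Y t \<in> - Obs \<and> ((\<lambda>s. f (Y s) (c s)) has_integral (Y t - x)) {0..t})"
    for x and c :: "real \<Rightarrow> 'c" and Y :: "real \<Rightarrow> real^2"
  have "\<exists>c Y. viable (x0 $ i) c Y" for i
  proof -
    have "x0 $ i \<in> - Obs" using x0 by simp
    then obtain c Y where "viable (x0 $ i) c Y"
      unfolding viable_def by (rule viable_trajectory_of_uniform_steps[OF \<open>0 < \<tau>\<close> _ step]) blast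
    then show ?thesis by blast
  qed
  then obtain c Y where cY: "\<And>i. viable (x0 $ i) (c i) (Y i)" by metis
  have "is_traj Obs f x0 (\<lambda>t. \<chi> i. c i t) (\<lambda>t. \<chi> i. Y i t)"
    using cY by (simp add: viable_def is_traj_def vec_eq_iff)
  moreover have "\<forall>t>0. \<forall>i. c i t \<in> A" "\<forall>i. c i \<in> borel_measurable (restrict_space lebesgue {0<..})"
    using cY by (simp_all add: viable_def)
  ultimately have "admissible_ctrl Obs A f x0 (\<lambda>t. \<chi> i. c i t)"
    unfolding admissible_ctrl_def by auto
  then show ?thesis by (rule that)
qed

section \<open>The value on the boundary of the target\<close>

lemma end_time_eq_0:
  assumes "Z 0 \<in> subtopology euclidean (free_space Obs) frontier_of target Obs"
  shows "end_time Obs Z = 0"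
proof -
  have "ereal 0 \<in> {ereal t | t. t \<ge> 0 \<and>
      Z t \<in> subtopology euclidean (free_space Obs) frontier_of target Obs}"
    using assms by blast
  then show ?thesis
    unfolding end_time_def zero_ereal_def[symmetric] by (intro antisym Inf_lower Inf_greatest) auto
qed

lemma payoff_eq_0:
  assumes "X \<in> subtopology euclidean (free_space Obs) frontier_of target Obs"
    and "admissible_ctrl Obs A f (fst X) a" and "admissible_ctrl Obs B g (snd X) b"
  shows "payoff Obs f g X a b = 0"
proof -
  obtain E P where EP: "is_traj Obs f (fst X) a E" "is_traj Obs g (snd X) b P"
    using assms(2,3) unfolding admissible_ctrl_def by blast
  have end0: "end_time Obs (\<lambda>t. (E' t, P' t)) = 0"
    if "is_traj Obs f (fst X) a E'" "is_traj Obs g (snd X) b P'" for E' P'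
    using that assms(1) by (intro end_time_eq_0) (simp add: is_traj_def)
  show ?thesis
    unfolding payoff_def
  proof (rule the_equality)
    show "\<exists>E P. is_traj Obs f (fst X) a E \<and> is_traj Obs g (snd X) b P \<and> 0 = end_time Obs (\<lambda>t. (E t, P t))"
      using EP end0[OF EP] by auto
  qed (auto simp: end0)
qed

lemma game_value_le_0_on_target_frontier:
  fixes Obs :: "(real^2) set" and X :: "(real^2^'m) \<times> (real^2^'n)"
  assumes "open Obs" and "bounded Obs" and "lipschitz_boundary Obs"
    and "\<exists>L. \<forall>a\<in>A. L-lipschitz_on (- Obs) (\<lambda>x. f x a)"
    and tang: "\<forall>p\<in>frontier Obs. (\<lambda>a. f p a) ` A \<inter> interior (clarke_tangent_cone (- Obs) p) \<noteq> {}"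
    and X: "X \<in> subtopology euclidean (free_space Obs) frontier_of target Obs"
  shows "game_value Obs A B f g X \<le> 0"
proof -
  have X_free: "X \<in> free_space Obs"
    using X frontier_of_subset_topspace by fastforce
  have "target Obs \<noteq> ({} :: ((real^2^'m) \<times> (real^2^'n)) set)"
    using X by (auto simp: frontier_of_def)
  then have "Obs \<noteq> {}" by (auto simp: target_def)
  moreover have "Obs \<noteq> UNIV" using \<open>bounded Obs\<close> not_bounded_UNIV by auto
  ultimately have "frontier Obs \<noteq> {}" using frontier_eq_empty by blast
  then have "A \<noteq> {}" using tang by blast
  moreover have "\<forall>i. fst X $ i \<notin> Obs" using X_free by (auto simp: free_space_def)
  ultimately obtain a0 where a0: "admissible_ctrl Obs A f (fst X) a0"
    using admissible_ctrl_exists[OF assms(1-3) _ assms(4,5)] by blast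
  \<comment> \<open>the evaders can simply ignore the pursuers\<close>
  have "(\<lambda>b. a0) \<in> evader_strategies Obs A B f g X"
    using a0 by (simp add: evader_strategies_def)
  then have "game_value Obs A B f g X
      \<le> (SUP b \<in> {b. admissible_ctrl Obs B g (snd X) b}. payoff Obs f g X a0 b)"
    unfolding game_value_def by (rule INF_lower2) simp
  also have "\<dots> \<le> 0"
    by (rule SUP_least) (simp add: payoff_eq_0[OF X a0])
  finally show ?thesis .
qed

lemma continuous_within_le_at_closure:
  fixes V :: "'a::t2_space \<Rightarrow> 'b::linorder_topology"
  assumes "continuous (at X within S) V" and "X \<in> closure {y \<in> S. c \<le> V y}"
  shows "c \<le> V X"
proof (rule ccontr)
  assume "\<not> c \<le> V X"
  then have "\<forall>\<^sub>F y in at X within S. V y < c"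
    using assms(1) by (intro order_tendstoD(2)) (auto simp: continuous_within)
  then obtain W where "open W" "X \<in> W" and W: "\<And>y. y \<in> W \<Longrightarrow> y \<noteq> X \<Longrightarrow> y \<in> S \<Longrightarrow> V y < c"
    unfolding eventually_at_topological by blast
  show False
    using assms(2) \<open>\<not> c \<le> V X\<close> \<open>open W\<close> \<open>X \<in> W\<close> W
    unfolding closure_def islimpt_def by (auto dest!: spec[of _ W]) (meson not_less)
qed

lemma continuous_within_gt_nhd:
  fixes V :: "'a::t2_space \<Rightarrow> 'b::linorder_topology"
  assumes "continuous (at X within S) V" and "c < V X"
  obtains W where "open W" "X \<in> W" "\<forall>y\<in>W \<inter> S. c < V y"
proof -
  have "\<forall>\<^sub>F y in at X within S. c < V y"
    using assms by (intro order_tendstoD(1)) (auto simp: continuous_within)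
  then obtain W where "open W" "X \<in> W" "\<And>y. y \<in> W \<Longrightarrow> y \<noteq> X \<Longrightarrow> y \<in> S \<Longrightarrow> c < V y"
    unfolding eventually_at_topological by blast
  then show ?thesis using that \<open>c < V X\<close> by blast
qed

lemma frontier_of_subtopology_complement:
  fixes X :: "'a::topological_space"
  assumes "X \<in> F - T" and "open W" "X \<in> W" and "W \<inter> (F - T) \<subseteq> L"
    and "X \<notin> subtopology euclidean F interior_of L"
  shows "X \<in> subtopology euclidean F frontier_of T"
proof -
  have "X \<in> subtopology euclidean F closure_of T"
  proof (rule ccontr)
    assume "X \<notin> subtopology euclidean F closure_of T"
    then obtain U where "openin (subtopology euclidean F) U" "X \<in> U" "U \<inter> T = {}"
      using assms(1) by (auto simp: in_closure_of)
    then obtain W' where "open W'" "U = W' \<inter> F" by (auto simp: openin_subtopology)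
    have "openin (subtopology euclidean F) ((W \<inter> W') \<inter> F)"
      using \<open>open W\<close> \<open>open W'\<close> by (auto simp: openin_subtopology)
    moreover have "(W \<inter> W') \<inter> F \<subseteq> L" using assms(4) \<open>U = W' \<inter> F\<close> \<open>U \<inter> T = {}\<close> by blast
    ultimately have "X \<in> subtopology euclidean F interior_of L"
      using assms(1,3) \<open>X \<in> U\<close> \<open>U = W' \<inter> F\<close> unfolding interior_of_def by blast
    then show False using assms(5) by blast
  qed
  then show ?thesis using assms(1) interior_of_subset[of _ T] by (auto simp: frontier_of_def)
qed

theorem lemma4p1:
  fixes Obs :: "(real^2) set"
    and A :: "'ca::topological_space set" and B :: "'cb::topological_space set"
    and f :: "real^2 \<Rightarrow> 'ca \<Rightarrow> real^2" and g :: "real^2 \<Rightarrow> 'cb \<Rightarrow> real^2"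
    and X :: "(real^2^'m::finite) \<times> (real^2^'n::finite)"
    and t1 t2 :: real
  assumes "open Obs" and "bounded Obs" and "lipschitz_boundary Obs"
    and "compact A" and "compact B"
    and "\<exists>L. \<forall>a\<in>A. L-lipschitz_on (- Obs) (\<lambda>x. f x a)"
    and "\<exists>L. \<forall>b\<in>B. L-lipschitz_on (- Obs) (\<lambda>x. g x b)"
    and "\<forall>x\<in>- Obs. convex ((\<lambda>a. f x a) ` A)"
    and "\<forall>x\<in>- Obs. convex ((\<lambda>b. g x b) ` B)"
    and "\<forall>p\<in>frontier Obs. (\<lambda>a. f p a) ` A \<inter> interior (clarke_tangent_cone (- Obs) p) \<noteq> {}"
    and "\<forall>p\<in>frontier Obs. (\<lambda>b. g p b) ` B \<inter> interior (clarke_tangent_cone (- Obs) p) \<noteq> {}"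
    and "X \<in> game_domain Obs"
    and "0 \<le> t1" and "t1 < t2"
    and "\<forall>t\<in>{t1..t2}. X \<in> Gamma Obs A B f g t"
  shows "\<not> continuous (at X within game_domain Obs) (game_value Obs A B f g)"
proof
  assume cont: "continuous (at X within game_domain Obs) (game_value Obs A B f g)"
  let ?V = "game_value Obs A B f g" and ?top = "subtopology euclidean (free_space Obs)"
  have level: "level_set Obs A B f g t = {Y \<in> game_domain Obs. ereal t \<le> ?V Y}" for t
    by (simp add: level_set_def)
  have boundary: "X \<in> ?top frontier_of level_set Obs A B f g t" if "t \<in> {t1..t2}" for t
    using assms(15) that by (simp add: Gamma_def)
  have "X \<in> closure (level_set Obs A B f g t2)"
    using boundary[of t2] \<open>t1 < t2\<close> closure_of_subtopology_subset[of euclidean "free_space Obs"]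
    by (auto simp: frontier_of_def)
  then have "ereal t2 \<le> ?V X"
    unfolding level by (rule continuous_within_le_at_closure[OF cont])
  with \<open>t1 < t2\<close> have "ereal t1 < ?V X" using less_le_trans[of "ereal t1" "ereal t2"] by simp
  then obtain W where "open W" "X \<in> W" and W: "\<forall>Y\<in>W \<inter> game_domain Obs. ereal t1 < ?V Y"
    by (rule continuous_within_gt_nhd[OF cont])
  then have "W \<inter> (free_space Obs - target Obs) \<subseteq> level_set Obs A B f g t1"
    by (auto simp: level game_domain_def less_imp_le)
  moreover have "X \<notin> ?top interior_of level_set Obs A B f g t1"
    using boundary[of t1] \<open>t1 < t2\<close> by (simp add: frontier_of_def)
  ultimately have "X \<in> ?top frontier_of target Obs"
    using assms(12) \<open>open W\<close> \<open>X \<in> W\<close> by (intro frontier_of_subtopology_complement) (auto simp: game_domain_def)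
  then have "?V X \<le> 0" by (rule game_value_le_0_on_target_frontier[OF assms(1-3,6,10)])
  with \<open>ereal t2 \<le> ?V X\<close> have "ereal t2 \<le> 0" by (rule order_trans)
  then show False using \<open>0 \<le> t1\<close> \<open>t1 < t2\<close> by simp
qed

end
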